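(* Let $G$ be a $\sigma$-compact locally compact Abelian group and $\Lambda\subset G$ relatively dense. The following are equivalent: (i) $\Lambda-\Lambda-\Lambda$ is locally finite; (ii) $\Lambda-\Lambda-\Lambda$ is uniformly discrete; (iii) $\Lambda$ is locally finite and there is a finite set $F\subset G$ with $\Lambda-\Lambda\subset\Lambda+F$.
   Context: Locally finite: $A\cap K$ finite for every compact $K$. Uniformly discrete: there is an open neighbourhood $U$ of $0$ with $(x+U)\cap A=\{x\}$ for all $x\in A$. Relatively dense: $\Lambda+K=G$ for some compact $K$. *)

theory Defs
  imports "HOL-Analysis.Analysis"
begin

definition sumset :: "'a::ab_group_add set \<Rightarrow> 'a set \<Rightarrow> 'a set" where
  "sumset A B = {a + b | a b. a \<in> A \<and> b \<in> B}"

definition diffset :: "'a::ab_group_add set \<Rightarrow> 'a set \<Rightarrow> 'a set" where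
  "diffset A B = {a - b | a b. a \<in> A \<and> b \<in> B}"

definition locally_finite_set :: "'a::topological_space set \<Rightarrow> bool" where
  "locally_finite_set A \<longleftrightarrow> (\<forall>K. compact K \<longrightarrow> finite (A \<inter> K))"

definition uniformly_discrete_set :: "'a::topological_ab_group_add set \<Rightarrow> bool" where
  "uniformly_discrete_set A \<longleftrightarrow>
     (\<exists>U. open U \<and> 0 \<in> U \<and> (\<forall>x\<in>A. ((\<lambda>u. x + u) ` U) \<inter> A = {x}))"

definition relatively_dense_set :: "'a::topological_ab_group_add set \<Rightarrow> bool" where
  "relatively_dense_set L \<longleftrightarrow> (\<exists>K. compact K \<and> sumset L K = UNIV)"

definition sigma_compact_space :: "'a::topological_space itself \<Rightarrow> bool" where
  "sigma_compact_space _ \<longleftrightarrow> (\<exists>K::nat \<Rightarrow> 'a set. (\<forall>n. compact (K n)) \<and> (\<Union>n. K n) = UNIV)"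

end

theory Submission
  imports Defs
begin

text \<open>
  Uniform discreteness implies local finiteness in any topological group: if \<open>V - V\<close> lies in the
  neighbourhood witnessing discreteness, each translate of \<open>V\<close> contains at most one point of the set,
  and a compact set is covered by finitely many such translates.
  For the converse, with \<open>D = \<Lambda> - \<Lambda> - \<Lambda>\<close>, the inclusion \<open>\<Lambda> - \<Lambda> \<subseteq> \<Lambda> + F\<close> shows that
  subtracting or adding \<open>\<Lambda>\<close> preserves being covered by finitely many translates of \<open>\<Lambda>\<close>, so
  \<open>D - D \<subseteq> D - \<Lambda> + \<Lambda> + \<Lambda>\<close> is covered by such translates and is therefore locally finite.
  Removing from a relatively compact neighbourhood of \<open>0\<close> the finitely many nonzero points of
  \<open>D - D\<close> it contains leaves a neighbourhood witnessing uniform discreteness.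
  Finally, a locally finite \<open>D\<close> contains \<open>-\<Lambda>\<close>, so \<open>\<Lambda>\<close> is locally finite, and writing
  \<open>G = \<Lambda> + K\<close> with \<open>K\<close> compact gives \<open>\<Lambda> - \<Lambda> \<subseteq> \<Lambda> + (D \<inter> K)\<close>.
\<close>

lemma finite_sumset:
  fixes A B :: "'a::ab_group_add set"
  assumes "finite A" "finite B"
  shows "finite (sumset A B)"
proof -
  have "sumset A B = (\<lambda>(a, b). a + b) ` (A \<times> B)"
    unfolding sumset_def by auto
  then show ?thesis
    using assms by simp
qed

lemma open_translation_group:
  fixes V :: "'a::topological_group_add set"
  assumes "open V"
  shows "open ((\<lambda>u. k + u) ` V)"
proof -
  have "(\<lambda>u. k + u) ` V = (\<lambda>y. - k + y) -` V"
    by (force simp: image_iff add.assoc[symmetric])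
  also have "open \<dots>"
    by (rule open_vimage[OF assms]) (intro continuous_intros)
  finally show ?thesis .
qed

lemma compact_translation_group:
  fixes K :: "'a::topological_group_add set"
  assumes "compact K"
  shows "compact ((\<lambda>y. y + c) ` K)"
  by (rule compact_continuous_image[OF _ assms]) (intro continuous_intros)

lemma nhds_zero_diff_subset:
  fixes U :: "'a::topological_group_add set"
  assumes "open U" "0 \<in> U"
  obtains V where "open V" "0 \<in> V" "\<And>a b. a \<in> V \<Longrightarrow> b \<in> V \<Longrightarrow> b - a \<in> U"
proof -
  have "open ((\<lambda>p. snd p - fst p) -` U)"
    by (rule open_vimage[OF assms(1)]) (intro continuous_intros)
  moreover have "(0, 0) \<in> (\<lambda>p::'a \<times> 'a. snd p - fst p) -` U"
    using assms(2) by simp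
  ultimately obtain A B where AB: "open A" "open B" "(0, 0) \<in> A \<times> B"
      "A \<times> B \<subseteq> (\<lambda>p::'a \<times> 'a. snd p - fst p) -` U"
    by (rule open_prod_elim)
  have "open (A \<inter> B)" "0 \<in> A \<inter> B"
    using AB(1-3) by auto
  moreover have "b - a \<in> U" if "a \<in> A \<inter> B" "b \<in> A \<inter> B" for a b
    using AB(4) that by (auto simp: subset_iff)
  ultimately show ?thesis
    by (rule that)
qed

lemma locally_finite_subset:
  "locally_finite_set B \<Longrightarrow> A \<subseteq> B \<Longrightarrow> locally_finite_set A"
  unfolding locally_finite_set_def by (meson Int_mono finite_subset subset_refl)

lemma locally_finite_if_uniformly_discrete:
  fixes D :: "'a::topological_ab_group_add set"
  assumes "uniformly_discrete_set D"
  shows "locally_finite_set D"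
  unfolding locally_finite_set_def
proof (intro allI impI)
  fix K :: "'a set"
  assume K: "compact K"
  obtain U where U: "open U" "0 \<in> U" "\<And>x. x \<in> D \<Longrightarrow> ((\<lambda>u. x + u) ` U) \<inter> D = {x}"
    using assms unfolding uniformly_discrete_set_def by blast
  obtain V where V: "open V" "0 \<in> V" "\<And>a b. a \<in> V \<Longrightarrow> b \<in> V \<Longrightarrow> b - a \<in> U"
    using nhds_zero_diff_subset[OF U(1,2)] by blast
  have "K \<subseteq> (\<Union>k\<in>K. (\<lambda>u. k + u) ` V)"
    using V(2) by (auto intro!: bexI[of _ 0] simp: image_iff)
  then obtain T where T: "T \<subseteq> K" "finite T" "K \<subseteq> (\<Union>k\<in>T. (\<lambda>u. k + u) ` V)"
    by (rule compactE_image[OF K open_translation_group[OF V(1)]])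
  have translate_subsingleton: "y = x"
    if x: "x \<in> D \<inter> (\<lambda>u. k + u) ` V" and y: "y \<in> D \<inter> (\<lambda>u. k + u) ` V" for k x y
  proof -
    obtain v where "v \<in> V" "x = k + v"
      using x by blast
    moreover obtain w where "w \<in> V" "y = k + w"
      using y by blast
    ultimately have "w - v \<in> U" "y = x + (w - v)"
      using V(3) by simp_all
    then have "y \<in> ((\<lambda>u. x + u) ` U) \<inter> D"
      using y by blast
    then show "y = x"
      using U(3) x by blast
  qed
  have "finite (D \<inter> (\<lambda>u. k + u) ` V)" for k
  proof (cases "D \<inter> (\<lambda>u. k + u) ` V = {}")
    case False
    then obtain x where "x \<in> D \<inter> (\<lambda>u. k + u) ` V"
      by blast
    then have "D \<inter> (\<lambda>u. k + u) ` V \<subseteq> {x}"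
      using translate_subsingleton by blast
    then show ?thesis
      by (rule finite_subset) simp
  qed simp
  then have "finite (\<Union>k\<in>T. D \<inter> (\<lambda>u. k + u) ` V)"
    using T(2) by (intro finite_UN_I)
  moreover have "D \<inter> K \<subseteq> (\<Union>k\<in>T. D \<inter> (\<lambda>u. k + u) ` V)"
    using T(3) by blast
  ultimately show "finite (D \<inter> K)"
    by (rule finite_subset[rotated])
qed

lemma locally_finite_sumset:
  fixes L :: "'a::topological_ab_group_add set"
  assumes "locally_finite_set L" "finite G"
  shows "locally_finite_set (sumset L G)"
  unfolding locally_finite_set_def
proof (intro allI impI)
  fix K :: "'a set"
  assume K: "compact K"
  have "finite (L \<inter> (\<lambda>y. y + - g) ` K)" for g
    using assms(1) compact_translation_group[OF K] unfolding locally_finite_set_def by blast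
  then have "finite (\<Union>g\<in>G. (\<lambda>l. l + g) ` (L \<inter> (\<lambda>y. y + - g) ` K))"
    using assms(2) by blast
  moreover have "sumset L G \<inter> K \<subseteq> (\<Union>g\<in>G. (\<lambda>l. l + g) ` (L \<inter> (\<lambda>y. y + - g) ` K))"
    unfolding sumset_def by (force simp: image_iff)
  ultimately show "finite (sumset L G \<inter> K)"
    by (rule finite_subset[rotated])
qed

lemma uniformly_discrete_if_locally_finite_diffset:
  fixes D :: "'a::{topological_ab_group_add, t2_space} set"
  assumes lc: "locally_compact_space (euclidean :: 'a topology)"
    and lf: "locally_finite_set (diffset D D)"
  shows "uniformly_discrete_set D"
proof -
  have "\<exists>U C. openin euclidean U \<and> compactin euclidean C \<and> (0::'a) \<in> U \<and> U \<subseteq> C"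
    using lc unfolding locally_compact_space_def by simp
  then obtain U C :: "'a set" where UC: "open U" "compact C" "0 \<in> U" "U \<subseteq> C"
    by auto
  define W where "W = U - (diffset D D \<inter> C - {0})"
  have "finite (diffset D D \<inter> C)"
    using lf UC(2) unfolding locally_finite_set_def by blast
  then have W: "open W" "0 \<in> W"
    unfolding W_def using UC by (auto intro!: open_Diff finite_imp_closed)
  have "((\<lambda>u. x + u) ` W) \<inter> D = {x}" if x: "x \<in> D" for x
  proof
    show "{x} \<subseteq> ((\<lambda>u. x + u) ` W) \<inter> D"
      using x W(2) by (auto intro!: image_eqI[of _ _ 0])
    show "((\<lambda>u. x + u) ` W) \<inter> D \<subseteq> {x}"
    proof
      fix y
      assume y: "y \<in> ((\<lambda>u. x + u) ` W) \<inter> D"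
      then obtain w where w: "w \<in> W" "y = x + w"
        by auto
      have "w \<in> diffset D D"
        using w x y unfolding diffset_def by force
      then have "w = 0"
        using w UC(4) unfolding W_def by auto
      then show "y \<in> {x}"
        using w by simp
    qed
  qed
  then show ?thesis
    using W unfolding uniformly_discrete_set_def by blast
qed

definition finitely_translated :: "'a::ab_group_add set \<Rightarrow> 'a set \<Rightarrow> bool" where
  "finitely_translated L X \<longleftrightarrow> (\<exists>G. finite G \<and> X \<subseteq> sumset L G)"

lemma finitely_translated_self: "finitely_translated L L"
  unfolding finitely_translated_def sumset_def by (rule exI[of _ "{0}"]) auto

lemma finitely_translated_diffset:
  fixes L :: "'a::ab_group_add set"
  assumes F: "finite F" "diffset L L \<subseteq> sumset L F"
    and X: "finitely_translated L X"
  shows "finitely_translated L (diffset X L)"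
proof -
  obtain G where G: "finite G" "X \<subseteq> sumset L G"
    using X unfolding finitely_translated_def by blast
  have "diffset X L \<subseteq> sumset L (sumset F G)"
  proof
    fix z
    assume "z \<in> diffset X L"
    then obtain x y where xy: "x \<in> X" "y \<in> L" "z = x - y"
      unfolding diffset_def by blast
    obtain l g where lg: "l \<in> L" "g \<in> G" "x = l + g"
      using G(2) xy(1) unfolding sumset_def by blast
    have "l - y \<in> diffset L L"
      using lg xy unfolding diffset_def by blast
    then obtain l' f where l'f: "l' \<in> L" "f \<in> F" "l - y = l' + f"
      using F(2) unfolding sumset_def by blast
    have "z = l' + (f + g)"
      using xy lg l'f by (simp add: algebra_simps)
    then show "z \<in> sumset L (sumset F G)"
      using l'f lg unfolding sumset_def by blast
  qed
  then show ?thesis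
    using finite_sumset[OF F(1) G(1)] unfolding finitely_translated_def by blast
qed

text \<open>Adding \<open>y \<in> \<Lambda>\<close> is subtracting \<open>l\<^sub>0 - y \<in> \<Lambda> + F\<close> and adding back \<open>l\<^sub>0\<close>.\<close>

lemma finitely_translated_sumset:
  fixes L :: "'a::ab_group_add set"
  assumes F: "finite F" "diffset L L \<subseteq> sumset L F"
    and X: "finitely_translated L X"
  shows "finitely_translated L (sumset X L)"
proof (cases "L = {}")
  case True
  then show ?thesis
    unfolding finitely_translated_def sumset_def by auto
next
  case False
  then obtain l0 where l0: "l0 \<in> L"
    by blast
  obtain G where G: "finite G" "diffset X L \<subseteq> sumset L G"
    using finitely_translated_diffset[OF F X] unfolding finitely_translated_def by blast
  define G' where "G' = (\<lambda>(g, h). g - h + l0) ` (G \<times> F)"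
  have "sumset X L \<subseteq> sumset L G'"
  proof
    fix z
    assume "z \<in> sumset X L"
    then obtain x y where xy: "x \<in> X" "y \<in> L" "z = x + y"
      unfolding sumset_def by blast
    have "l0 - y \<in> diffset L L"
      using l0 xy unfolding diffset_def by blast
    then obtain m h where mh: "m \<in> L" "h \<in> F" "l0 - y = m + h"
      using F(2) unfolding sumset_def by blast
    have "x - m \<in> diffset X L"
      using xy mh unfolding diffset_def by blast
    then obtain l g where lg: "l \<in> L" "g \<in> G" "x - m = l + g"
      using G(2) unfolding sumset_def by blast
    have "z = l + (g - h + l0)"
      using xy mh lg by (simp add: algebra_simps)
    moreover have "g - h + l0 \<in> G'"
      unfolding G'_def using lg mh by force
    ultimately show "z \<in> sumset L G'"
      using lg unfolding sumset_def by blast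
  qed
  moreover have "finite G'"
    unfolding G'_def using G(1) F(1) by simp
  ultimately show ?thesis
    unfolding finitely_translated_def by blast
qed

lemma locally_finite_if_finitely_translated:
  fixes L :: "'a::topological_ab_group_add set"
  assumes "locally_finite_set L" "finitely_translated L X"
  shows "locally_finite_set X"
  using assms locally_finite_sumset locally_finite_subset
  unfolding finitely_translated_def by blast

lemma diffset_triple_diffset_subset:
  fixes L :: "'a::ab_group_add set"
  defines "D \<equiv> diffset (diffset L L) L"
  shows "diffset D D \<subseteq> sumset (sumset (diffset D L) L) L"
proof
  fix z
  assume "z \<in> diffset D D"
  then obtain y a b c where "z = y - (a - b - c)" "y \<in> D" "a \<in> L" "b \<in> L" "c \<in> L"
    unfolding D_def diffset_def by blast
  moreover have "y - (a - b - c) = ((y - a) + b) + c"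
    by (simp add: algebra_simps)
  ultimately show "z \<in> sumset (sumset (diffset D L) L) L"
    unfolding sumset_def diffset_def by blast
qed

lemma uniformly_discrete_triple_diffset:
  fixes L :: "'a::{topological_ab_group_add, t2_space} set"
  assumes lc: "locally_compact_space (euclidean :: 'a topology)"
    and lf: "locally_finite_set L"
    and F: "finite F" "diffset L L \<subseteq> sumset L F"
  shows "uniformly_discrete_set (diffset (diffset L L) L)"
proof -
  define D where "D = diffset (diffset L L) L"
  have "finitely_translated L D"
    unfolding D_def
    by (intro finitely_translated_diffset[OF F] finitely_translated_self)
  then have "finitely_translated L (sumset (sumset (diffset D L) L) L)"
    by (intro finitely_translated_sumset[OF F] finitely_translated_diffset[OF F])
  then have "locally_finite_set (diffset D D)"
    using diffset_triple_diffset_subset[of L] locally_finite_if_finitely_translated[OF lf]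
      locally_finite_subset unfolding D_def by blast
  then show ?thesis
    unfolding D_def by (rule uniformly_discrete_if_locally_finite_diffset[OF lc])
qed

lemma locally_finite_if_locally_finite_triple_diffset:
  fixes L :: "'a::topological_ab_group_add set"
  assumes lf: "locally_finite_set (diffset (diffset L L) L)" and "L \<noteq> {}"
  shows "locally_finite_set L"
  unfolding locally_finite_set_def
proof (intro allI impI)
  fix C :: "'a set"
  assume "compact C"
  obtain l0 where "l0 \<in> L"
    using \<open>L \<noteq> {}\<close> by blast
  then have "- l \<in> diffset (diffset L L) L" if "l \<in> L" for l
  proof -
    have "- l = (l0 - l0) - l"
      by simp
    then show ?thesis
      using \<open>l0 \<in> L\<close> that unfolding diffset_def by blast
  qed
  then have "uminus ` (L \<inter> C) \<subseteq> diffset (diffset L L) L \<inter> uminus ` C"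
    by blast
  moreover have "compact (uminus ` C)"
    by (rule compact_continuous_image[OF _ \<open>compact C\<close>]) (intro continuous_intros)
  then have "finite (diffset (diffset L L) L \<inter> uminus ` C)"
    using lf unfolding locally_finite_set_def by blast
  ultimately have "finite (uminus ` (L \<inter> C))"
    by (rule finite_subset)
  then show "finite (L \<inter> C)"
    by (rule finite_imageD) (simp add: inj_on_def)
qed

lemma diffset_subset_sumset_if_relatively_dense:
  fixes L :: "'a::topological_ab_group_add set"
  assumes lf: "locally_finite_set (diffset (diffset L L) L)"
    and rd: "relatively_dense_set L"
  shows "\<exists>F. finite F \<and> diffset L L \<subseteq> sumset L F"
proof -
  obtain K where K: "compact K" "sumset L K = UNIV"
    using rd unfolding relatively_dense_set_def by blast
  have "diffset L L \<subseteq> sumset L (diffset (diffset L L) L \<inter> K)"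
  proof
    fix x
    assume x: "x \<in> diffset L L"
    have "x \<in> sumset L K"
      using K(2) by simp
    then obtain l k where lk: "l \<in> L" "k \<in> K" "x = l + k"
      unfolding sumset_def by blast
    then have "k = x - l"
      by simp
    then have "k \<in> diffset (diffset L L) L"
      using x lk(1) unfolding diffset_def by blast
    then show "x \<in> sumset L (diffset (diffset L L) L \<inter> K)"
      using lk unfolding sumset_def by blast
  qed
  moreover have "finite (diffset (diffset L L) L \<inter> K)"
    using lf K(1) unfolding locally_finite_set_def by blast
  ultimately show ?thesis
    by blast
qed

theorem lemma7p1:
  fixes \<Lambda> :: "'a::{topological_ab_group_add, t2_space} set"
  assumes lc: "locally_compact_space (euclidean :: 'a topology)"
    and sc: "sigma_compact_space TYPE('a)"
    and rd: "relatively_dense_set \<Lambda>"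
  shows "(locally_finite_set (diffset (diffset \<Lambda> \<Lambda>) \<Lambda>)
            \<longleftrightarrow> uniformly_discrete_set (diffset (diffset \<Lambda> \<Lambda>) \<Lambda>))
       \<and> (uniformly_discrete_set (diffset (diffset \<Lambda> \<Lambda>) \<Lambda>)
            \<longleftrightarrow> (locally_finite_set \<Lambda> \<and>
                 (\<exists>F. finite F \<and> diffset \<Lambda> \<Lambda> \<subseteq> sumset \<Lambda> F)))"
proof -
  have "\<Lambda> \<noteq> {}"
    using rd unfolding relatively_dense_set_def sumset_def by auto
  then have i_iii: "locally_finite_set \<Lambda> \<and> (\<exists>F. finite F \<and> diffset \<Lambda> \<Lambda> \<subseteq> sumset \<Lambda> F)"
    if "locally_finite_set (diffset (diffset \<Lambda> \<Lambda>) \<Lambda>)"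
    using that rd locally_finite_if_locally_finite_triple_diffset
      diffset_subset_sumset_if_relatively_dense by blast
  show ?thesis
    using i_iii locally_finite_if_uniformly_discrete uniformly_discrete_triple_diffset[OF lc]
    by blast
qed

end
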